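(* Let $f\ge 1$ and $k\ge 2$ be integers and let there be $n=kf+1$ validators, each maintaining a local DAG as described in the context (Tusk setting). If an honest validator $p_i$ commits a leader vertex $v\in DAG_i[\mathit{round}(w,1)]$ in a wave $w$ (i.e. at least $f+1$ vertices of $DAG_i[\mathit{round}(w,2)]$ have an edge to $v$), then for every honest validator $p_j$, every wave $w'>w$ and every leader vertex $v'$ of wave $w'$ committed by $p_j$ (in particular $v'\in DAG_j[\mathit{round}(w',1)]$; the leader of wave $w'$ is the $\mathit{round}(w',1)$ vertex of an arbitrary validator, selected by a shared coin), there is a path from $v'$ to $v$ in $DAG_j$.
   Context: Setting: $n=kf+1$ validators $p_1,\dots,p_n$, at most $f$ Byzantine, the rest honest. All local DAGs are subsets of one common set of vertices. Each vertex has a round number $r\ge1$ and a source validator; for each validator and round there is at most one vertex (no equivocation), so all local DAGs containing a given validator's vertex for a given round contain the identical vertex with identical edges. Every vertex of round $r\ge2$ has edges to $(k-1)f+1$ vertices of round $r-1$ with distinct sources. Each validator $p_i$ has a local DAG $DAG_i$, closed under edges (if $u\in DAG_i$ then all vertices $u$ has edges to are in $DAG_i$); $DAG_i[r]$ is its set of round-$r$ vertices; a path from $u$ to $v$ is a sequence of contiguous edges from $u$ to $v$. Waves consist of 3 rounds and consecutive waves are pipelined so that round 3 of wave $w$ is round 1 of wave $w+1$: $\mathit{round}(w,j)=2(w-1)+j$ for $j=1,2,3$. A validator $p_i$ commits the leader $v$ of wave $w$ (direct commit rule) if at least $f+1$ vertices of $DAG_i[\mathit{round}(w,2)]$ have an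 edge to $v$. *)

theory Defs
  imports Main
begin

text \<open>Vertices have an abstract type 'v; rnd u is the round of u, src u its source
validator, and E u x means that u has an edge to x. Since there is no equivocation,
edges are a global relation on the common vertex set.\<close>

definition wround :: "nat \<Rightarrow> nat \<Rightarrow> nat" where
  "wround w j = 2 * (w - 1) + j"

definition dag_round :: "('v \<Rightarrow> nat) \<Rightarrow> 'v set \<Rightarrow> nat \<Rightarrow> 'v set" where
  "dag_round rnd D r = {u \<in> D. rnd u = r}"

definition commits ::
  "('v \<Rightarrow> 'v \<Rightarrow> bool) \<Rightarrow> ('v \<Rightarrow> nat) \<Rightarrow> nat \<Rightarrow> 'v set \<Rightarrow> nat \<Rightarrow> 'v \<Rightarrow> bool" where
  "commits E rnd f D w v \<longleftrightarrow>
     v \<in> dag_round rnd D (wround w 1) \<and>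
     f + 1 \<le> card {u \<in> dag_round rnd D (wround w 2). E u v}"

definition dag_path :: "('v \<Rightarrow> 'v \<Rightarrow> bool) \<Rightarrow> 'v set \<Rightarrow> 'v \<Rightarrow> 'v \<Rightarrow> bool" where
  "dag_path E D u v \<longleftrightarrow> (\<lambda>a b. E a b \<and> a \<in> D \<and> b \<in> D)\<^sup>+\<^sup>+ u v"

end

theory Submission
  imports Defs
begin

text \<open>The f + 1 vertices of round 2w that vote for the leader v and the (k - 1) f + 1
parents of any vertex of round 2w + 1 all lie in round 2w, which has at most n = k f + 1
vertices because there is no equivocation. As the two sizes add up to k f + 2, the sets meet,
so every vertex of round 2w + 1 reaches v in two steps. A later vertex, in particular the
leader of a later wave, descends to round 2w + 1 one edge at a time.\<close>

lemma Int_nonempty_if_card_sum_gt: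
  assumes "A \<subseteq> C" "B \<subseteq> C" "finite C" "card C < card A + card B"
  shows "A \<inter> B \<noteq> {}"
proof
  assume "A \<inter> B = {}"
  then have "card A + card B = card (A \<union> B)"
    using assms by (metis card_Un_disjoint finite_subset)
  also have "\<dots> \<le> card C"
    using assms by (intro card_mono) auto
  finally show False
    using assms(4) by simp
qed

lemma dag_path_edge:
  "E u x \<Longrightarrow> u \<in> D \<Longrightarrow> x \<in> D \<Longrightarrow> dag_path E D u x"
  by (simp add: dag_path_def tranclp.r_into_trancl)

lemma dag_path_edge_trans:
  "E u x \<Longrightarrow> u \<in> D \<Longrightarrow> x \<in> D \<Longrightarrow> dag_path E D x v \<Longrightarrow> dag_path E D u v"
  unfolding dag_path_def by (rule tranclp_into_tranclp2) simp_all

lemma dag_path_from_higher_round: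
  assumes base: "\<And>u. u \<in> D \<Longrightarrow> rnd u = r \<Longrightarrow> dag_path E D u v"
    and descend: "\<And>u. u \<in> D \<Longrightarrow> r < rnd u \<Longrightarrow> \<exists>x\<in>D. E u x \<and> rnd u = Suc (rnd x)"
  shows "u \<in> D \<Longrightarrow> r \<le> rnd u \<Longrightarrow> dag_path E D u v"
proof (induction "rnd u - r" arbitrary: u)
  case 0
  then show ?case using base by simp
next
  case (Suc m)
  then obtain x where "x \<in> D" "E u x" "rnd u = Suc (rnd x)"
    using descend by fastforce
  moreover have "dag_path E D x v"
    using Suc.hyps(1)[of x] Suc.hyps(2) \<open>x \<in> D\<close> \<open>rnd u = Suc (rnd x)\<close> by simp
  ultimately show ?case
    using Suc.prems(1) by (blast intro: dag_path_edge_trans)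
qed

locale tusk_dag =
  fixes n f k :: nat
    and Vs :: "'v set"
    and rnd :: "'v \<Rightarrow> nat" and src :: "'v \<Rightarrow> nat"
    and E :: "'v \<Rightarrow> 'v \<Rightarrow> bool"
  assumes n_eq: "n = k * f + 1"
    and src_range: "u \<in> Vs \<Longrightarrow> src u \<in> {1..n}"
    and no_equiv: "u \<in> Vs \<Longrightarrow> u' \<in> Vs \<Longrightarrow> rnd u = rnd u' \<Longrightarrow> src u = src u' \<Longrightarrow> u = u'"
    and edges_in: "E u x \<Longrightarrow> x \<in> Vs"
    and edges_prev: "E u x \<Longrightarrow> rnd u = Suc (rnd x)"
    and parents_card: "u \<in> Vs \<Longrightarrow> 2 \<le> rnd u \<Longrightarrow> card {x. E u x} = (k - 1) * f + 1"
begin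

lemma inj_on_src_round: "inj_on src {u \<in> Vs. rnd u = r}"
  by (intro inj_onI) (auto intro: no_equiv)

lemma src_round_subset: "src ` {u \<in> Vs. rnd u = r} \<subseteq> {1..n}"
  using src_range by blast

lemma finite_round: "finite {u \<in> Vs. rnd u = r}"
  using finite_imageD[OF finite_subset[OF src_round_subset] inj_on_src_round] by simp

lemma card_round_le: "card {u \<in> Vs. rnd u = r} \<le> n"
  using card_inj_on_le[OF inj_on_src_round src_round_subset] by simp

lemma parent_in_quorum:
  assumes u: "u \<in> Vs" "rnd u = Suc r" "1 \<le> r"
    and S: "S \<subseteq> {s \<in> Vs. rnd s = r}" "f + 1 \<le> card S"
  shows "\<exists>s\<in>S. E u s"
proof -
  have "(k - 1) * f + f \<ge> k * f"
    by (cases k) simp_all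
  then have "card {u \<in> Vs. rnd u = r} < card {x. E u x} + card S"
    using card_round_le[of r] parents_card[OF u(1)] u(2,3) S(2) n_eq by simp
  moreover have "{x. E u x} \<subseteq> {u \<in> Vs. rnd u = r}"
    using u(2) by (auto dest: edges_in edges_prev)
  ultimately have "{x. E u x} \<inter> S \<noteq> {}"
    using S(1) finite_round by (blast dest: Int_nonempty_if_card_sum_gt)
  then show ?thesis by blast
qed

lemma dag_path_to_voted:
  assumes D: "D \<subseteq> Vs" "\<And>u x. u \<in> D \<Longrightarrow> E u x \<Longrightarrow> x \<in> D"
    and votes: "S \<subseteq> {s \<in> Vs. rnd s = r \<and> E s v}" "f + 1 \<le> card S" "1 \<le> r"
    and u: "u \<in> D" "r < rnd u"
  shows "dag_path E D u v"
proof (rule dag_path_from_higher_round[of D rnd "Suc r"])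
  fix y assume y: "y \<in> D" "rnd y = Suc r"
  then obtain s where "s \<in> S" "E y s"
    using parent_in_quorum[of y r S] votes D(1) by blast
  then have "s \<in> D" "E s v"
    using D(2) y(1) votes(1) by blast+
  then have "dag_path E D s v"
    using D(2) by (blast intro: dag_path_edge)
  then show "dag_path E D y v"
    using dag_path_edge_trans \<open>E y s\<close> \<open>s \<in> D\<close> y(1) by metis
next
  fix y assume y: "y \<in> D" "Suc r < rnd y"
  then have "card {x. E y x} \<noteq> 0"
    using parents_card[of y] D(1) by auto
  then obtain x where "E y x"
    by (metis Collect_empty_eq card.empty)
  then show "\<exists>x\<in>D. E y x \<and> rnd y = Suc (rnd x)"
    using D(2) y(1) edges_prev by blast
qed (use u in auto)

end

theorem lemma3:
  fixes f k n :: nat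
    and Vs :: "'v set"
    and rnd :: "'v \<Rightarrow> nat" and src :: "'v \<Rightarrow> nat"
    and E :: "'v \<Rightarrow> 'v \<Rightarrow> bool"
    and DAG :: "nat \<Rightarrow> 'v set"
    and Honest :: "nat set"
  assumes f_ge: "f \<ge> 1" and k_ge: "k \<ge> 2" and n_def: "n = k * f + 1"
    and honest_sub: "Honest \<subseteq> {1..n}"
    and byz_bound: "card ({1..n} - Honest) \<le> f"
    and rnd_pos: "\<forall>u\<in>Vs. rnd u \<ge> 1"
    and src_range: "\<forall>u\<in>Vs. src u \<in> {1..n}"
    and no_equiv: "\<forall>u\<in>Vs. \<forall>u'\<in>Vs. rnd u = rnd u' \<and> src u = src u' \<longrightarrow> u = u'"
    and edges_in: "\<forall>u x. E u x \<longrightarrow> u \<in> Vs \<and> x \<in> Vs"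
    and edges_prev: "\<forall>u x. E u x \<longrightarrow> rnd u = rnd x + 1"
    and edges_card: "\<forall>u\<in>Vs. rnd u \<ge> 2 \<longrightarrow>
                       card {x. E u x} = (k - 1) * f + 1 \<and> inj_on src {x. E u x}"
    and dag_sub: "\<forall>i\<in>{1..n}. DAG i \<subseteq> Vs"
    and dag_closed: "\<forall>i\<in>{1..n}. \<forall>u x. u \<in> DAG i \<and> E u x \<longrightarrow> x \<in> DAG i"
    and hi: "i \<in> Honest" and hj: "j \<in> Honest"
    and w_pos: "w \<ge> 1"
    and commit_i: "commits E rnd f (DAG i) w v"
    and w'_gt: "w' > w"
    and commit_j: "commits E rnd f (DAG j) w' v'"
  shows "dag_path E (DAG j) v' v"
proof -
  interpret tusk_dag n f k Vs rnd src E
    using n_def src_range no_equiv edges_in edges_prev edges_card by unfold_locales auto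
  have "i \<in> {1..n}" "j \<in> {1..n}"
    using hi hj honest_sub by auto
  have "wround w 2 = 2 * w"
    using w_pos by (simp add: wround_def)
  let ?S = "{s \<in> dag_round rnd (DAG i) (2 * w). E s v}"
  have votes: "?S \<subseteq> {s \<in> Vs. rnd s = 2 * w \<and> E s v}" "f + 1 \<le> card ?S" "1 \<le> 2 * w"
    using dag_sub \<open>i \<in> {1..n}\<close> commit_i \<open>wround w 2 = 2 * w\<close> w_pos
    by (auto simp: dag_round_def commits_def)
  have later: "v' \<in> DAG j" "2 * w < rnd v'"
    using commit_j w'_gt by (auto simp: commits_def dag_round_def wround_def)
  have "DAG j \<subseteq> Vs" "\<And>u x. u \<in> DAG j \<Longrightarrow> E u x \<Longrightarrow> x \<in> DAG j"
    using dag_sub dag_closed \<open>j \<in> {1..n}\<close> by blast+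
  from dag_path_to_voted[OF this votes later] show ?thesis .
qed

end
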